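(* Let $K:[0,\infty)\to[0,\infty)$ satisfy: (AK1) $K$ is non-increasing and strictly positive on $[0,\infty)$; (AK2) $K(0)=1$ and $c_K\int_{\mathbb{R}^d}K(\|\mathbf{x}\|)\,d\mathbf{x}=1$ for some constant $c_K>0$; (AK3) there exist $A,\alpha>0$ with $K(x)/K(y)\le A\exp(-(x-y)^\alpha)$ for all $0\le y\le x$. For $\sigma>0$ let $K_\sigma(x)=K(x/\sigma)$. Let $\mathcal{X}=\{\mathbf{x}_1,\dots,\mathbf{x}_n\}\subset\mathbb{R}^d$ and suppose there is a partition of $\mathcal{X}$ into nonempty sets $\mathcal{C}_1,\dots,\mathcal{C}_k$ such that $\min_{m\in[k]}d(\mathcal{C}_m,\mathcal{X}\setminus\mathcal{C}_m)-\max_{l\in[k]}\delta_l=\delta>0$, where $\mathcal{C}_l$ is connected at distance $\delta_l$ for each $l\in[k]$. Let $\mathbf{U}$ have as columns the eigenvectors of the unnormalised Laplacian of the graph $(\mathcal{X},K_\sigma)$. Then, provided $0<\sigma<\delta\log(An^{z/3})^{-1/\alpha}$, where $z$ satisfies $n^{z-15}\ge81k^{15}$, we have $$\max_{\substack{i,j\in[n],l\in[k]:\\\mathbf{x}_i,\mathbf{x}_j\in\mathcal{C}_l}}\|\mathbf{U}_{i,1:k}-\mathbf{U}_{j,1:k}\|\le\left(\frac{k^3}{n^{z-9}}\right)^{1/6},\qquad \min_{\substack{i,j\in[n],l\in[k]:\\\mathbf{x}_i\in\mathcal{C}_l,\mathbf{x}_j\notin\mathcal{C}_l}}\|\mathb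f{U}_{i,1:k}-\mathbf{U}_{j,1:k}\|\ge\sqrt{\frac{2}{n}}-6\left(\frac{k^{27}}{n^{z-15}}\right)^{1/24}.$$
   Context: $[n]=\{1,\dots,n\}$; $\|\cdot\|$ is the Euclidean norm. For sets $S,U$, $d(S,U)=\inf_{\mathbf{x}\in S,\mathbf{y}\in U}\|\mathbf{x}-\mathbf{y}\|$. A set $S$ is connected at distance $\delta$ if there is no partition of $S$ into $S_1,S_2$ with $d(S_1,S_2)>\delta$. The graph $(\mathcal{X},K_\sigma)$ has affinity matrix $\mathbf{A}_{ij}=K_\sigma(\|\mathbf{x}_i-\mathbf{x}_j\|)$ (including $i=j$), degree matrix $\mathbf{D}=\mathrm{diag}(\sum_j\mathbf{A}_{ij})$, unnormalised Laplacian $\mathbf{D}-\mathbf{A}$. "The eigenvectors" means an orthonormal eigenbasis arranged as columns with eigenvalues in nondecreasing order; $\mathbf{U}_{i,1:k}$ is the first $k$ entries of row $i$. *)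

theory Defs
  imports "HOL-Analysis.Analysis" "HOL-Library.Extended_Real"
begin

text \<open>Distance between sets, d(S,U) = inf over pairs; valued in ereal so that an
  empty set gives +infinity, as for the real infimum over the empty set.\<close>
definition set_dist :: "'a::metric_space set \<Rightarrow> 'a set \<Rightarrow> ereal" where
  "set_dist S U = (INF p \<in> S \<times> U. ereal (dist (fst p) (snd p)))"

definition connected_at_dist :: "real \<Rightarrow> 'a::metric_space set \<Rightarrow> bool" where
  "connected_at_dist \<delta> S \<longleftrightarrow>
     \<not> (\<exists>S1 S2. S1 \<noteq> {} \<and> S2 \<noteq> {} \<and> S1 \<union> S2 = S \<and> S1 \<inter> S2 = {}
              \<and> set_dist S1 S2 > ereal \<delta>)"

text \<open>Affinity matrix of the graph (X, K_sigma) with points x 0, ..., x (n-1),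
  K_sigma(t) = K(t / sigma); matrices are functions on indices below n.\<close>
definition affinity :: "(real \<Rightarrow> real) \<Rightarrow> real \<Rightarrow> (nat \<Rightarrow> 'a::real_normed_vector) \<Rightarrow> nat \<Rightarrow> nat \<Rightarrow> real" where
  "affinity K \<sigma> x i j = K (norm (x i - x j) / \<sigma>)"

definition laplacian :: "nat \<Rightarrow> (real \<Rightarrow> real) \<Rightarrow> real \<Rightarrow> (nat \<Rightarrow> 'a::real_normed_vector) \<Rightarrow> nat \<Rightarrow> nat \<Rightarrow> real" where
  "laplacian n K \<sigma> x i j =
     (if i = j then (\<Sum>m<n. affinity K \<sigma> x i m) else 0) - affinity K \<sigma> x i j"

definition ordered_orthonormal_eigenbasis ::
  "nat \<Rightarrow> (nat \<Rightarrow> nat \<Rightarrow> real) \<Rightarrow> (nat \<Rightarrow> nat \<Rightarrow> real) \<Rightarrow> (nat \<Rightarrow> real) \<Rightarrow> bool" where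
  "ordered_orthonormal_eigenbasis n L U lam \<longleftrightarrow>
     (\<forall>a<n. \<forall>b<n. (\<Sum>i<n. U i a * U i b) = (if a = b then 1 else 0)) \<and>
     (\<forall>a<n. \<forall>i<n. (\<Sum>j<n. L i j * U j a) = lam a * U i a) \<and>
     (\<forall>a b. a \<le> b \<longrightarrow> b < n \<longrightarrow> lam a \<le> lam b)"

definition row_dist :: "nat \<Rightarrow> (nat \<Rightarrow> nat \<Rightarrow> real) \<Rightarrow> nat \<Rightarrow> nat \<Rightarrow> real" where
  "row_dist k U i j = sqrt (\<Sum>a<k. (U i a - U j a)\<^sup>2)"

end

theory Submission
  imports Defs
begin

text \<open>Write \<open>D = max\<^sub>l \<delta>\<^sub>l\<close> and \<open>w = K (D / \<sigma>)\<close>. Inside a cluster, the edges of affinity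
  at least \<open>w\<close> connect it; between clusters, (AK3) and the bound on \<open>\<sigma>\<close> make every affinity
  at most \<open>\<epsilon> w\<close> with \<open>\<epsilon> = n powr (-z/3)\<close>. The normalised cluster indicators are \<open>k\<close>
  orthonormal vectors of Laplacian energy at most \<open>\<epsilon> w n\<close>, so by Ky Fan's principle the first
  \<open>k\<close> eigenvalues sum to at most \<open>k n \<epsilon> w\<close>. An eigenvector with eigenvalue \<open>\<lambda>\<close> changes by
  at most \<open>sqrt (\<lambda> / w)\<close> along an edge of affinity at least \<open>w\<close>, hence by at most
  \<open>n sqrt (\<lambda> / w)\<close> within a cluster, which gives the first bound. For the second, each row
  \<open>U\<^sub>i\<^sub>,\<^sub>1\<^sub>:\<^sub>k\<close> is close to the mean row of its cluster, and the mean rows, scaled by the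
  square roots of the cluster sizes, form a nearly orthogonal \<open>k \<times> k\<close> matrix; so the mean rows
  of clusters of sizes \<open>m\<close> and \<open>m'\<close> are about \<open>sqrt (1/m + 1/m') \<ge> sqrt (2/n)\<close> apart.
  If all \<open>\<delta>\<^sub>l\<close> are negative, the clusters are singletons, \<open>k = n\<close>, and distinct rows of
  \<open>U\<close> are \<open>sqrt 2\<close> apart.\<close>

section \<open>Orthonormal bases, quadratic forms and elementary estimates\<close>

definition graph_laplacian :: "nat \<Rightarrow> (nat \<Rightarrow> nat \<Rightarrow> real) \<Rightarrow> nat \<Rightarrow> nat \<Rightarrow> real" where
  "graph_laplacian n W i j = (if i = j then (\<Sum>m<n. W i m) else 0) - W i j"

lemma laplacian_eq_graph_laplacian: "laplacian n K \<sigma> x = graph_laplacian n (affinity K \<sigma> x)"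
  by (simp add: fun_eq_iff laplacian_def graph_laplacian_def)

lemma sum_sq_minus_identity:
  fixes X :: "nat \<Rightarrow> nat \<Rightarrow> real"
  shows "(\<Sum>i<N. \<Sum>j<N. (X i j - (if i = j then 1 else 0))\<^sup>2) =
         (\<Sum>i<N. \<Sum>j<N. (X i j)\<^sup>2) - 2 * (\<Sum>i<N. X i i) + N"
proof -
  have "(\<Sum>i<N. \<Sum>j<N. (X i j - (if i = j then 1 else 0))\<^sup>2) =
        (\<Sum>i<N. \<Sum>j<N. (X i j)\<^sup>2 - 2 * (if i = j then X i i else 0) + (if i = j then 1 else 0))"
    by (intro sum.cong) (auto simp: power2_eq_square algebra_simps)
  also have "\<dots> = (\<Sum>i<N. \<Sum>j<N. (X i j)\<^sup>2) - 2 * (\<Sum>i<N. X i i) + N"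
    by (simp add: sum.distrib sum_subtractf sum_distrib_left[symmetric])
  finally show ?thesis .
qed

lemma sum_rotate3:
  "(\<Sum>j\<in>J. \<Sum>a\<in>A. \<Sum>b\<in>B. F j a b) = (\<Sum>a\<in>A. \<Sum>b\<in>B. \<Sum>j\<in>J. F j a b)"
  by (subst sum.swap) (rule sum.cong[OF refl], rule sum.swap)

lemma sum_sq_gram_transpose:
  fixes P :: "nat \<Rightarrow> nat \<Rightarrow> real"
  shows "(\<Sum>i<N. \<Sum>j<N. (\<Sum>a<M. P i a * P j a)\<^sup>2) = (\<Sum>a<M. \<Sum>b<M. (\<Sum>i<N. P i a * P i b)\<^sup>2)"
proof -
  have "(\<Sum>i<N. \<Sum>j<N. (\<Sum>a<M. P i a * P j a)\<^sup>2) =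
        (\<Sum>i<N. \<Sum>j<N. \<Sum>a<M. \<Sum>b<M. P i a * P j a * (P i b * P j b))"
    by (simp add: power2_eq_square sum_product)
  also have "\<dots> = (\<Sum>i<N. \<Sum>a<M. \<Sum>b<M. \<Sum>j<N. P i a * P j a * (P i b * P j b))"
    by (rule sum.cong[OF refl], rule sum_rotate3)
  also have "\<dots> = (\<Sum>a<M. \<Sum>b<M. \<Sum>i<N. \<Sum>j<N. P i a * P j a * (P i b * P j b))"
    by (rule sum_rotate3)
  also have "\<dots> = (\<Sum>a<M. \<Sum>b<M. (\<Sum>i<N. P i a * P i b)\<^sup>2)"
    by (simp add: power2_eq_square sum_product mult_ac)
  finally show ?thesis .
qed

lemma gram_deviation_transpose:
  fixes P :: "nat \<Rightarrow> nat \<Rightarrow> real"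
  shows "(\<Sum>i<N. \<Sum>j<N. ((\<Sum>a<N. P i a * P j a) - (if i = j then 1 else 0))\<^sup>2) =
         (\<Sum>a<N. \<Sum>b<N. ((\<Sum>i<N. P i a * P i b) - (if a = b then 1 else 0))\<^sup>2)"
proof -
  have "(\<Sum>i<N. \<Sum>a<N. P i a * P i a) = (\<Sum>a<N. \<Sum>i<N. P i a * P i a)"
    by (rule sum.swap)
  then show ?thesis
    by (simp add: sum_sq_minus_identity sum_sq_gram_transpose[of P N N])
qed

lemma orthonormal_columns_imp_rows:
  fixes U :: "nat \<Rightarrow> nat \<Rightarrow> real"
  assumes "\<forall>a<n. \<forall>b<n. (\<Sum>i<n. U i a * U i b) = (if a = b then 1 else 0)"
    and "i < n" "j < n"
  shows "(\<Sum>a<n. U i a * U j a) = (if i = j then 1 else 0)"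
proof -
  have "(\<Sum>p<n. \<Sum>q<n. ((\<Sum>a<n. U p a * U q a) - (if p = q then 1 else 0))\<^sup>2) = 0"
    using assms(1) by (simp add: gram_deviation_transpose)
  then have "(\<Sum>q<n. ((\<Sum>a<n. U i a * U q a) - (if i = q then 1 else 0))\<^sup>2) = 0"
    using assms(2) by (subst (asm) sum_nonneg_eq_0_iff) (auto intro: sum_nonneg)
  then have "((\<Sum>a<n. U i a * U j a) - (if i = j then 1 else 0))\<^sup>2 = 0"
    using assms(3) by (subst (asm) sum_nonneg_eq_0_iff) auto
  then show ?thesis by simp
qed

lemma row_dist_orthonormal:
  fixes U :: "nat \<Rightarrow> nat \<Rightarrow> real"
  assumes "\<forall>a<n. \<forall>b<n. (\<Sum>i<n. U i a * U i b) = (if a = b then 1 else 0)"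
    and "i < n" "j < n" "i \<noteq> j"
  shows "row_dist n U i j = sqrt 2"
proof -
  have "(\<Sum>a<n. (U i a - U j a)\<^sup>2)
      = (\<Sum>a<n. U i a * U i a) + (\<Sum>a<n. U j a * U j a) - 2 * (\<Sum>a<n. U i a * U j a)"
    by (simp add: power2_eq_square algebra_simps sum.distrib sum_subtractf sum_distrib_left)
  then show ?thesis
    using orthonormal_columns_imp_rows[OF assms(1)] assms(2-4) by (simp add: row_dist_def)
qed

lemma orthonormal_rows_expansion:
  fixes U :: "nat \<Rightarrow> nat \<Rightarrow> real"
  assumes rows: "\<And>i j. i < n \<Longrightarrow> j < n \<Longrightarrow> (\<Sum>a<n. U i a * U j a) = (if i = j then 1 else 0)"
    and "j < n"
  shows "(\<Sum>a<n. U j a * (\<Sum>i<n. U i a * f i)) = f j"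
proof -
  have "(\<Sum>a<n. U j a * (\<Sum>i<n. U i a * f i)) = (\<Sum>a<n. \<Sum>i<n. f i * (U j a * U i a))"
    by (simp add: sum_distrib_left mult_ac)
  also have "\<dots> = (\<Sum>i<n. f i * (\<Sum>a<n. U j a * U i a))"
    by (subst sum.swap) (simp add: sum_distrib_left)
  also have "\<dots> = (\<Sum>i<n. if j = i then f i else 0)"
    using rows \<open>j < n\<close> by (intro sum.cong) auto
  finally show ?thesis using \<open>j < n\<close> by simp
qed

lemma orthonormal_rows_parseval:
  fixes U :: "nat \<Rightarrow> nat \<Rightarrow> real"
  assumes "\<And>i j. i < n \<Longrightarrow> j < n \<Longrightarrow> (\<Sum>a<n. U i a * U j a) = (if i = j then 1 else 0)"
  shows "(\<Sum>a<n. (\<Sum>i<n. U i a * f i)\<^sup>2) = (\<Sum>i<n. (f i)\<^sup>2)"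
proof -
  have "(\<Sum>a<n. (\<Sum>i<n. U i a * f i)\<^sup>2) = (\<Sum>a<n. \<Sum>j<n. f j * (U j a * (\<Sum>i<n. U i a * f i)))"
    by (simp add: power2_eq_square sum_distrib_right mult_ac)
  also have "\<dots> = (\<Sum>j<n. f j * (\<Sum>a<n. U j a * (\<Sum>i<n. U i a * f i)))"
    by (subst sum.swap) (simp add: sum_distrib_left)
  also have "\<dots> = (\<Sum>j<n. f j * f j)"
    using orthonormal_rows_expansion[OF assms] by (intro sum.cong) auto
  finally show ?thesis by (simp add: power2_eq_square)
qed

lemma eigenbasis_quadratic_form:
  fixes U L :: "nat \<Rightarrow> nat \<Rightarrow> real"
  assumes rows: "\<And>i j. i < n \<Longrightarrow> j < n \<Longrightarrow> (\<Sum>a<n. U i a * U j a) = (if i = j then 1 else 0)"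
    and eig: "\<forall>a<n. \<forall>i<n. (\<Sum>j<n. L i j * U j a) = lam a * U i a"
  shows "(\<Sum>i<n. f i * (\<Sum>j<n. L i j * f j)) = (\<Sum>a<n. lam a * (\<Sum>i<n. U i a * f i)\<^sup>2)"
proof -
  define c where "c a = (\<Sum>i<n. U i a * f i)" for a
  have L_f: "(\<Sum>j<n. L i j * f j) = (\<Sum>a<n. c a * lam a * U i a)" if "i < n" for i
  proof -
    have "(\<Sum>j<n. L i j * f j) = (\<Sum>j<n. L i j * (\<Sum>a<n. U j a * c a))"
      using orthonormal_rows_expansion[OF rows] unfolding c_def by (intro sum.cong) auto
    also have "\<dots> = (\<Sum>a<n. c a * (\<Sum>j<n. L i j * U j a))"
      by (simp add: sum_distrib_left mult_ac) (subst sum.swap, simp)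
    finally show ?thesis
      using eig that by (simp add: mult.assoc)
  qed
  have "(\<Sum>i<n. f i * (\<Sum>j<n. L i j * f j)) = (\<Sum>i<n. f i * (\<Sum>a<n. c a * lam a * U i a))"
    using L_f by (intro sum.cong) auto
  also have "\<dots> = (\<Sum>a<n. c a * lam a * c a)"
    unfolding c_def by (simp add: sum_distrib_left mult_ac) (subst sum.swap, simp)
  finally show ?thesis
    unfolding c_def by (simp add: power2_eq_square mult_ac)
qed

lemma graph_laplacian_quadratic_form:
  assumes sym: "\<And>i j. W i j = W j i"
  shows "(\<Sum>i<n. f i * (\<Sum>j<n. graph_laplacian n W i j * f j))
       = (\<Sum>i<n. \<Sum>j<n. W i j * (f i - f j)\<^sup>2) / 2"
proof -
  have row: "(\<Sum>j<n. graph_laplacian n W i j * f j) = (\<Sum>j<n. W i j) * f i - (\<Sum>j<n. W i j * f j)"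
    if "i < n" for i
    using that
    by (simp add: graph_laplacian_def left_diff_distrib sum_subtractf
        if_distrib[where f="\<lambda>x. x * _"] cong: if_cong)
  have swap: "(\<Sum>i<n. \<Sum>j<n. W i j * (f j)\<^sup>2) = (\<Sum>i<n. \<Sum>j<n. W i j * (f i)\<^sup>2)"
    by (subst sum.swap) (simp add: sym)
  have "(\<Sum>i<n. \<Sum>j<n. W i j * (f i - f j)\<^sup>2) =
     (\<Sum>i<n. \<Sum>j<n. W i j * (f i)\<^sup>2) + (\<Sum>i<n. \<Sum>j<n. W i j * (f j)\<^sup>2)
       - 2 * (\<Sum>i<n. \<Sum>j<n. W i j * f i * f j)"
    by (simp add: power2_eq_square algebra_simps sum.distrib sum_subtractf sum_distrib_left)
  then show ?thesis
    using row swap by (simp add: right_diff_distrib sum_subtractf sum_distrib_left sum_distrib_right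
        power2_eq_square mult_ac)
qed

lemma sum_sq_pairwise_diff:
  fixes f :: "nat \<Rightarrow> real"
  shows "(\<Sum>i<n. \<Sum>j<n. (f i - f j)\<^sup>2) = 2 * n * (\<Sum>i<n. (f i)\<^sup>2) - 2 * (\<Sum>i<n. f i)\<^sup>2"
proof -
  have "(\<Sum>i<n. \<Sum>j<n. (f i - f j)\<^sup>2) = (\<Sum>i<n. \<Sum>j<n. (f i)\<^sup>2 + (f j)\<^sup>2 - 2 * (f i * f j))"
    by (simp add: power2_eq_square algebra_simps)
  also have "\<dots> = (\<Sum>i<n. \<Sum>j<n. (f i)\<^sup>2) + (\<Sum>i<n. \<Sum>j<n. (f j)\<^sup>2) - 2 * (\<Sum>i<n. \<Sum>j<n. f i * f j)"
    by (simp only: sum.distrib sum_subtractf sum_distrib_left)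
  also have "(\<Sum>i<n. \<Sum>j<n. f i * f j) = (\<Sum>i<n. f i)\<^sup>2"
    by (simp only: power2_eq_square sum_product)
  finally show ?thesis by (simp add: sum_distrib_left mult.assoc)
qed

lemma sum_pair_le_double_sum:
  fixes g :: "nat \<Rightarrow> nat \<Rightarrow> real"
  assumes "\<And>i j. 0 \<le> g i j" and "i < n" "j < n" "i \<noteq> j"
  shows "g i j + g j i \<le> (\<Sum>p<n. \<Sum>q<n. g p q)"
proof -
  have "g i j + g j i \<le> (\<Sum>j'<n. g i j') + (\<Sum>i'<n. g j i')"
    using assms by (intro add_mono member_le_sum) auto
  also have "\<dots> = (\<Sum>i'\<in>{i, j}. \<Sum>j'<n. g i' j')" using assms by simp
  also have "\<dots> \<le> (\<Sum>p<n. \<Sum>q<n. g p q)"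
    using assms by (intro sum_mono2) (auto intro: sum_nonneg)
  finally show ?thesis .
qed

text \<open>The inequality behind Ky Fan's minimum principle.\<close>
lemma sum_initial_le_weighted_sum:
  fixes lam p :: "nat \<Rightarrow> real"
  assumes mono: "\<And>a b. a \<le> b \<Longrightarrow> b < n \<Longrightarrow> lam a \<le> lam b"
    and p: "\<And>a. a < n \<Longrightarrow> 0 \<le> p a \<and> p a \<le> 1"
    and p_sum: "(\<Sum>a<n. p a) = real k" and "k \<le> n"
  shows "(\<Sum>a<k. lam a) \<le> (\<Sum>a<n. lam a * p a)"
proof (cases "k = 0")
  case True
  then have "\<forall>a<n. p a = 0"
    using p_sum p sum_nonneg_eq_0_iff[of "{..<n}" p] by auto
  then show ?thesis using True by simp
next
  case False
  define \<mu> where "\<mu> = lam (k - 1)"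
  have split: "{..<n} = {..<k} \<union> {k..<n}" using \<open>k \<le> n\<close> by auto
  have low: "\<mu> * p a - \<mu> \<le> lam a * p a - lam a" if "a < k" for a
  proof -
    have "0 \<le> (\<mu> - lam a) * (1 - p a)"
      using mono[of a "k - 1"] p[of a] that \<open>k \<le> n\<close> unfolding \<mu>_def by auto
    then show ?thesis by (simp add: algebra_simps)
  qed
  have high: "\<mu> * p a \<le> lam a * p a" if "a \<in> {k..<n}" for a
    using mono[of "k - 1" a] p[of a] that False unfolding \<mu>_def by (auto intro: mult_right_mono)
  have "(\<Sum>a<k. \<mu> * p a - \<mu>) \<le> (\<Sum>a<k. lam a * p a - lam a)"
    using low by (intro sum_mono) auto
  moreover have "(\<Sum>a\<in>{k..<n}. \<mu> * p a) \<le> (\<Sum>a\<in>{k..<n}. lam a * p a)"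
    using high by (intro sum_mono) auto
  moreover have "(\<Sum>a<n. g a) = (\<Sum>a<k. g a) + (\<Sum>a\<in>{k..<n}. g a)" for g :: "nat \<Rightarrow> real"
    unfolding split by (rule sum.union_disjoint) auto
  ultimately have "\<mu> * (\<Sum>a<n. p a) - \<mu> * k \<le> (\<Sum>a<n. lam a * p a) - (\<Sum>a<k. lam a)"
    by (simp add: sum_subtractf sum_distrib_left algebra_simps)
  then show ?thesis using p_sum by simp
qed

text \<open>The vertices within \<open>t * B\<close> of \<open>i\<close> form a set that grows with \<open>t\<close> until it is all
  of \<open>J\<close>.\<close>
lemma connected_graph_diff_le:
  fixes f :: "'v \<Rightarrow> real" and B :: real
  assumes "finite J" "0 \<le> B"
    and edge: "\<And>u v. u \<in> J \<Longrightarrow> v \<in> J \<Longrightarrow> E u v \<Longrightarrow> \<bar>f u - f v\<bar> \<le> B"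
    and connected: "\<And>S. S \<subseteq> J \<Longrightarrow> S \<noteq> {} \<Longrightarrow> S \<noteq> J \<Longrightarrow> \<exists>u\<in>S. \<exists>v\<in>J - S. E u v"
    and "i \<in> J" "j \<in> J"
  shows "\<bar>f i - f j\<bar> \<le> card J * B"
proof -
  define R where "R t = {v\<in>J. \<bar>f i - f v\<bar> \<le> real t * B}" for t :: nat
  have R_sub: "R t \<subseteq> J" for t unfolding R_def by auto
  have R_fin: "finite (R t)" for t using finite_subset[OF R_sub \<open>finite J\<close>] .
  have R_mono: "R t \<subseteq> R (Suc t)" for t
  proof -
    have "real t * B \<le> real (Suc t) * B" using \<open>0 \<le> B\<close> by (simp add: mult_right_mono)
    then show ?thesis unfolding R_def by auto
  qed
  have R_grows: "min (t + 1) (card J) \<le> card (R t)" for t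
  proof (induction t)
    case 0
    have "i \<in> R 0" using \<open>i \<in> J\<close> unfolding R_def by simp
    then have "1 \<le> card (R 0)"
      using R_fin[of 0] by (metis One_nat_def Suc_leI card_gt_0_iff empty_iff)
    then show ?case by simp
  next
    case (Suc t)
    show ?case
    proof (cases "R t = J")
      case True
      then show ?thesis using card_mono[OF R_fin R_mono[of t]] by simp
    next
      case False
      have "i \<in> R t" using \<open>i \<in> J\<close> \<open>0 \<le> B\<close> unfolding R_def by simp
      then obtain u v where u: "u \<in> R t" and v: "v \<in> J - R t" and "E u v"
        using connected[OF R_sub[of t] _ False] by blast
      have "\<bar>f i - f v\<bar> \<le> \<bar>f i - f u\<bar> + \<bar>f u - f v\<bar>" by linarith
      also have "\<dots> \<le> real t * B + B"
        using u v \<open>E u v\<close> edge unfolding R_def by (auto intro: add_mono)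
      finally have "v \<in> R (Suc t)" using v unfolding R_def by (simp add: algebra_simps)
      then have "card (R t) < card (R (Suc t))"
        using v R_mono[of t] R_fin by (intro psubset_card_mono) auto
      then show ?thesis using Suc.IH by simp
    qed
  qed
  have "card J \<le> card (R (card J))"
    using R_grows[of "card J"] by simp
  then have "R (card J) = J"
    using card_mono[OF \<open>finite J\<close> R_sub[of "card J"]]
    by (intro card_subset_eq[OF \<open>finite J\<close> R_sub]) simp
  then show ?thesis using \<open>j \<in> J\<close> unfolding R_def by auto
qed

lemma le_sqrt_of_unit_interval:
  fixes t :: real
  assumes "0 \<le> t" "t \<le> 1"
  shows "t \<le> sqrt t"
  using real_sqrt_le_mono[of "t * t" t] assms by (simp add: mult_left_le_one_le)

lemma perturbed_sum_squares_ge: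
  fixes x y g1 g2 g3 \<rho> :: real
  assumes "1 - \<rho> \<le> g1" "1 - \<rho> \<le> g2" "g3 \<le> \<rho>" "0 \<le> \<rho>" "0 < x" "0 < y"
  shows "(1 - 2 * \<rho>) * (x\<^sup>2 + y\<^sup>2) \<le> x\<^sup>2 * g1 + y\<^sup>2 * g2 - 2 * x * y * g3"
proof -
  have "2 * x * y * g3 \<le> 2 * x * y * \<rho>"
    using assms by (intro mult_left_mono) auto
  also have "\<dots> \<le> (x\<^sup>2 + y\<^sup>2) * \<rho>"
    using sum_squares_bound[of x y] assms by (intro mult_right_mono) auto
  finally have "2 * x * y * g3 \<le> \<rho> * (x\<^sup>2 + y\<^sup>2)" by (simp add: mult.commute)
  moreover have "x\<^sup>2 * (1 - \<rho>) \<le> x\<^sup>2 * g1" "y\<^sup>2 * (1 - \<rho>) \<le> y\<^sup>2 * g2"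
    using assms by (auto intro: mult_left_mono)
  ultimately show ?thesis by (simp add: algebra_simps)
qed

section \<open>Spectral embedding of a clustered weighted graph\<close>

locale spectral_clusters =
  fixes n k :: nat and cluster :: "nat \<Rightarrow> nat" and W U :: "nat \<Rightarrow> nat \<Rightarrow> real"
    and lam :: "nat \<Rightarrow> real" and w \<epsilon> :: real
  assumes cluster_less: "i < n \<Longrightarrow> cluster i < k"
    and cluster_nonempty: "l < k \<Longrightarrow> \<exists>i<n. cluster i = l"
    and W_sym: "W i j = W j i"
    and W_nonneg: "0 \<le> W i j"
    and eigenbasis: "ordered_orthonormal_eigenbasis n (graph_laplacian n W) U lam"
    and w_pos: "0 < w"
    and eps_nonneg: "0 \<le> \<epsilon>"
    and W_between: "i < n \<Longrightarrow> j < n \<Longrightarrow> cluster i \<noteq> cluster j \<Longrightarrow> W i j \<le> \<epsilon> * w"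
    and W_within_connected: "l < k \<Longrightarrow> S \<subseteq> {i. i < n \<and> cluster i = l} \<Longrightarrow> S \<noteq> {}
      \<Longrightarrow> S \<noteq> {i. i < n \<and> cluster i = l} \<Longrightarrow> \<exists>u\<in>S. \<exists>v\<in>{i. i < n \<and> cluster i = l} - S. w \<le> W u v"
begin

definition members :: "nat \<Rightarrow> nat set" where
  "members l = {i. i < n \<and> cluster i = l}"

abbreviation cluster_size :: "nat \<Rightarrow> nat" where
  "cluster_size l \<equiv> card (members l)"

lemma mem_members: "i \<in> members l \<longleftrightarrow> i < n \<and> cluster i = l"
  by (simp add: members_def)

lemma finite_members: "finite (members l)"
  by (simp add: members_def)

lemma cluster_size_pos: "l < k \<Longrightarrow> 0 < cluster_size l"
  using cluster_nonempty[of l] finite_members[of l] by (auto simp: card_gt_0_iff mem_members)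

lemma cluster_size_le: "cluster_size l \<le> n"
proof -
  have "members l \<subseteq> {..<n}" by (auto simp: mem_members)
  then show ?thesis using card_mono[of "{..<n}"] by fastforce
qed

lemma sum_over_clusters: "(\<Sum>i<n. g i) = (\<Sum>l<k. \<Sum>i\<in>members l. g i)"
proof -
  have "(\<Sum>l<k. sum g {i \<in> {..<n}. cluster i = l}) = sum g {..<n}"
    by (rule sum.group) (auto intro: cluster_less)
  then show ?thesis by (simp add: members_def)
qed

lemma sum_if_cluster: "(\<Sum>i<n. if cluster i = l then g i else 0) = (\<Sum>i\<in>members l. g i)"
  by (simp add: sum.inter_filter[symmetric] members_def)

lemma k_le_n: "k \<le> n"
proof -
  have "real k \<le> (\<Sum>l<k. real (cluster_size l))"
    using sum_mono[of "{..<k}" "\<lambda>_. 1::real" "\<lambda>l. real (cluster_size l)"] cluster_size_pos by force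
  also have "\<dots> = n"
    using sum_over_clusters[of "\<lambda>_. 1::real"] by simp
  finally show ?thesis by simp
qed

lemma columns_orthonormal: "a < n \<Longrightarrow> b < n \<Longrightarrow> (\<Sum>i<n. U i a * U i b) = (if a = b then 1 else 0)"
  using eigenbasis by (simp add: ordered_orthonormal_eigenbasis_def)

lemma rows_orthonormal: "i < n \<Longrightarrow> j < n \<Longrightarrow> (\<Sum>a<n. U i a * U j a) = (if i = j then 1 else 0)"
  using eigenbasis orthonormal_columns_imp_rows
  unfolding ordered_orthonormal_eigenbasis_def by blast

lemma eigenvector_eq: "\<forall>a<n. \<forall>i<n. (\<Sum>j<n. graph_laplacian n W i j * U j a) = lam a * U i a"
  using eigenbasis by (simp add: ordered_orthonormal_eigenbasis_def)

lemma eigenvalues_mono: "a \<le> b \<Longrightarrow> b < n \<Longrightarrow> lam a \<le> lam b"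
  using eigenbasis by (simp add: ordered_orthonormal_eigenbasis_def)

lemma eigenvalue_eq: "a < n \<Longrightarrow> lam a = (\<Sum>i<n. \<Sum>j<n. W i j * (U i a - U j a)\<^sup>2) / 2"
  using graph_laplacian_quadratic_form[where W=W and n=n and f="\<lambda>i. U i a", OF W_sym] eigenvector_eq
    columns_orthonormal[of a a]
  by (simp add: mult.left_commute[of _ "lam a"] sum_distrib_left[symmetric])

lemma eigenvalue_nonneg: "a < n \<Longrightarrow> 0 \<le> lam a"
  by (simp add: eigenvalue_eq sum_nonneg W_nonneg)

lemma eigenvector_jump_le:
  assumes "a < n" "i < n" "j < n" "w \<le> W i j"
  shows "w * (U i a - U j a)\<^sup>2 \<le> lam a"
proof (cases "i = j")
  case True
  then show ?thesis using eigenvalue_nonneg[OF \<open>a < n\<close>] by simp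
next
  case False
  have "w * (U i a - U j a)\<^sup>2 \<le> W i j * (U i a - U j a)\<^sup>2"
    using assms by (simp add: mult_right_mono)
  also have "\<dots> = (W i j * (U i a - U j a)\<^sup>2 + W j i * (U j a - U i a)\<^sup>2) / 2"
    by (simp add: W_sym power2_commute)
  also have "\<dots> \<le> lam a"
    using sum_pair_le_double_sum[of "\<lambda>i j. W i j * (U i a - U j a)\<^sup>2" i n j] assms False
    by (simp add: eigenvalue_eq W_nonneg)
  finally show ?thesis .
qed

lemma eigenvector_cluster_oscillation:
  assumes "l < k" "i \<in> members l" "j \<in> members l" "a < n"
  shows "\<bar>U i a - U j a\<bar> \<le> n * sqrt (lam a / w)"
proof -
  have jump: "\<bar>U u a - U v a\<bar> \<le> sqrt (lam a / w)"
    if "u \<in> members l" "v \<in> members l" "w \<le> W u v" for u v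
  proof -
    have "(U u a - U v a)\<^sup>2 \<le> lam a / w"
      using eigenvector_jump_le[of a u v] that \<open>a < n\<close> w_pos
      by (simp add: mem_members field_simps)
    then show ?thesis by (metis real_sqrt_abs real_sqrt_le_mono)
  qed
  have "\<bar>U i a - U j a\<bar> \<le> cluster_size l * sqrt (lam a / w)"
    using assms W_within_connected[OF \<open>l < k\<close>] eigenvalue_nonneg[OF \<open>a < n\<close>] w_pos
    by (intro connected_graph_diff_le[OF finite_members _ jump, where E="\<lambda>u v. w \<le> W u v"])
      (auto simp: members_def)
  also have "\<dots> \<le> n * sqrt (lam a / w)"
    using cluster_size_le[of l] eigenvalue_nonneg[OF \<open>a < n\<close>] w_pos by (intro mult_right_mono) auto
  finally show ?thesis .
qed

definition indicator_vec :: "nat \<Rightarrow> nat \<Rightarrow> real" where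
  "indicator_vec l i = (if cluster i = l then 1 / sqrt (cluster_size l) else 0)"

lemma indicator_vec_norm: "l < k \<Longrightarrow> (\<Sum>i<n. (indicator_vec l i)\<^sup>2) = 1"
  using cluster_size_pos[of l]
  by (simp add: indicator_vec_def if_distrib[where f="\<lambda>x. x\<^sup>2"] power_divide sum_if_cluster
      cong: if_cong)

lemma indicator_vec_coeff_sq_le:
  assumes "l < k"
  shows "(\<Sum>i<n. U i a * indicator_vec l i)\<^sup>2 \<le> (\<Sum>i\<in>members l. (U i a)\<^sup>2)"
proof -
  have "(\<Sum>i<n. U i a * indicator_vec l i) = (\<Sum>i\<in>members l. U i a) / sqrt (cluster_size l)"
    by (simp add: indicator_vec_def if_distrib[where f="\<lambda>x. _ * x"] sum_if_cluster
        sum_divide_distrib cong: if_cong)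
  moreover have "(\<Sum>i\<in>members l. 1 * U i a)\<^sup>2 \<le> (\<Sum>i\<in>members l. 1\<^sup>2) * (\<Sum>i\<in>members l. (U i a)\<^sup>2)"
    by (rule Cauchy_Schwarz_ineq_sum)
  ultimately show ?thesis
    using cluster_size_pos[OF assms] by (simp add: power_divide divide_le_eq mult.commute)
qed

text \<open>The squared norm of the projection of the \<open>a\<close>-th eigenvector onto the span of the
  (orthonormal) cluster indicators.\<close>
definition cluster_mass :: "nat \<Rightarrow> real" where
  "cluster_mass a = (\<Sum>l<k. (\<Sum>i<n. U i a * indicator_vec l i)\<^sup>2)"

lemma cluster_mass_le_one: "a < n \<Longrightarrow> cluster_mass a \<le> 1"
proof -
  assume "a < n"
  have "cluster_mass a \<le> (\<Sum>l<k. \<Sum>i\<in>members l. (U i a)\<^sup>2)"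
    unfolding cluster_mass_def by (intro sum_mono indicator_vec_coeff_sq_le) auto
  also have "\<dots> = (\<Sum>i<n. U i a * U i a)"
    by (simp add: sum_over_clusters[symmetric] power2_eq_square)
  finally show ?thesis using columns_orthonormal[OF \<open>a < n\<close> \<open>a < n\<close>] by simp
qed

lemma sum_cluster_mass: "(\<Sum>a<n. cluster_mass a) = k"
proof -
  have "(\<Sum>a<n. cluster_mass a) = (\<Sum>l<k. \<Sum>a<n. (\<Sum>i<n. U i a * indicator_vec l i)\<^sup>2)"
    unfolding cluster_mass_def by (rule sum.swap)
  also have "\<dots> = (\<Sum>l<k. 1)"
    using orthonormal_rows_parseval[OF rows_orthonormal] indicator_vec_norm by simp
  finally show ?thesis by simp
qed

lemma indicator_vec_energy_le:
  assumes "l < k"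
  shows "(\<Sum>i<n. indicator_vec l i * (\<Sum>j<n. graph_laplacian n W i j * indicator_vec l j))
           \<le> \<epsilon> * w * n"
proof -
  have "W i j * (indicator_vec l i - indicator_vec l j)\<^sup>2
          \<le> \<epsilon> * w * (indicator_vec l i - indicator_vec l j)\<^sup>2" if "i < n" "j < n" for i j
    using W_between[OF that] by (cases "cluster i = cluster j") (auto simp: indicator_vec_def mult_right_mono)
  then have "(\<Sum>i<n. \<Sum>j<n. W i j * (indicator_vec l i - indicator_vec l j)\<^sup>2)
       \<le> \<epsilon> * w * (\<Sum>i<n. \<Sum>j<n. (indicator_vec l i - indicator_vec l j)\<^sup>2)"
    unfolding sum_distrib_left by (intro sum_mono) auto
  also have "\<dots> \<le> \<epsilon> * w * (2 * n)"
    using eps_nonneg w_pos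
    by (intro mult_left_mono) (simp_all add: sum_sq_pairwise_diff indicator_vec_norm[OF assms])
  finally show ?thesis
    by (simp add: graph_laplacian_quadratic_form[where W=W, OF W_sym])
qed

text \<open>Ky Fan's principle, applied to the orthonormal cluster indicators.\<close>
lemma sum_initial_eigenvalues_le: "(\<Sum>a<k. lam a) \<le> real k * real n * \<epsilon> * w"
proof -
  have "(\<Sum>a<k. lam a) \<le> (\<Sum>a<n. lam a * cluster_mass a)"
    using cluster_mass_le_one sum_cluster_mass k_le_n eigenvalues_mono
    by (intro sum_initial_le_weighted_sum) (auto simp: cluster_mass_def sum_nonneg)
  also have "\<dots> = (\<Sum>l<k. \<Sum>a<n. lam a * (\<Sum>i<n. U i a * indicator_vec l i)\<^sup>2)"
    unfolding cluster_mass_def by (simp add: sum_distrib_left) (rule sum.swap)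
  also have "\<dots> = (\<Sum>l<k. \<Sum>i<n. indicator_vec l i * (\<Sum>j<n. graph_laplacian n W i j * indicator_vec l j))"
    using eigenbasis_quadratic_form[OF rows_orthonormal eigenvector_eq] by simp
  also have "\<dots> \<le> (\<Sum>l<k. \<epsilon> * w * n)"
    using indicator_vec_energy_le by (intro sum_mono) auto
  finally show ?thesis by (simp add: mult_ac)
qed

lemma sum_initial_eigenvalue_ratios_le: "(\<Sum>a<k. lam a / w) \<le> real k * real n * \<epsilon>"
  using sum_initial_eigenvalues_le w_pos by (simp add: sum_divide_distrib[symmetric] divide_le_eq)

lemma L2_set_le_of_eigenvalue_bounds:
  assumes "\<And>a. a < k \<Longrightarrow> \<bar>f a\<bar> \<le> n * sqrt (lam a / w)"
  shows "L2_set f {..<k} \<le> n * sqrt (real k * real n * \<epsilon>)"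
proof -
  have "(\<Sum>a<k. (f a)\<^sup>2) \<le> (\<Sum>a<k. (n * sqrt (lam a / w))\<^sup>2)"
    using assms by (intro sum_mono, subst power2_abs[symmetric], intro power_mono) auto
  also have "\<dots> = n\<^sup>2 * (\<Sum>a<k. lam a / w)"
    unfolding sum_distrib_left
  proof (intro sum.cong refl)
    fix a assume "a \<in> {..<k}"
    then have "0 \<le> lam a / w" using k_le_n eigenvalue_nonneg w_pos by simp
    then show "(n * sqrt (lam a / w))\<^sup>2 = n\<^sup>2 * (lam a / w)"
      by (simp add: power_mult_distrib)
  qed
  also have "\<dots> \<le> n\<^sup>2 * (real k * real n * \<epsilon>)"
    using sum_initial_eigenvalue_ratios_le by (intro mult_left_mono) auto
  also have "\<dots> = (n * sqrt (real k * real n * \<epsilon>))\<^sup>2"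
    using eps_nonneg by (simp add: power_mult_distrib)
  finally show ?thesis
    unfolding L2_set_def using eps_nonneg by (intro real_le_lsqrt) auto
qed

lemma row_dist_same_cluster:
  assumes "cluster i = cluster j" "i < n" "j < n"
  shows "row_dist k U i j \<le> n * sqrt (real k * real n * \<epsilon>)"
  using assms eigenvector_cluster_oscillation[of "cluster j" i j] k_le_n cluster_less
  unfolding row_dist_def L2_set_def[symmetric]
  by (intro L2_set_le_of_eigenvalue_bounds) (auto simp: mem_members)

definition cluster_mean :: "nat \<Rightarrow> nat \<Rightarrow> real" where
  "cluster_mean a l = (\<Sum>i\<in>members l. U i a) / cluster_size l"

definition deviation :: "nat \<Rightarrow> nat \<Rightarrow> real" where
  "deviation a i = U i a - cluster_mean a (cluster i)"

definition residual :: real where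
  "residual = (\<Sum>i<n. \<Sum>a<k. (deviation a i)\<^sup>2)"

lemma sum_deviation_cluster: "(\<Sum>i\<in>members l. deviation a i) = 0"
proof (cases "cluster_size l = 0")
  case True
  then show ?thesis using finite_members by simp
next
  case False
  have "(\<Sum>i\<in>members l. deviation a i) = (\<Sum>i\<in>members l. U i a - cluster_mean a l)"
    by (intro sum.cong) (auto simp: deviation_def mem_members)
  then show ?thesis using False by (simp add: sum_subtractf cluster_mean_def)
qed

lemma deviation_abs_le:
  assumes "a < n" "i < n"
  shows "\<bar>deviation a i\<bar> \<le> n * sqrt (lam a / w)"
proof -
  define l where "l = cluster i"
  have l: "l < k" "i \<in> members l" using assms cluster_less by (auto simp: l_def mem_members)
  have size: "0 < real (cluster_size l)" using cluster_size_pos[OF l(1)] by simp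
  have "deviation a i = (\<Sum>j\<in>members l. U i a - U j a) / cluster_size l"
    using size by (simp add: deviation_def cluster_mean_def l_def[symmetric] sum_subtractf field_simps)
  also have "\<bar>\<dots>\<bar> \<le> (\<Sum>j\<in>members l. \<bar>U i a - U j a\<bar>) / cluster_size l"
    using size by (simp add: divide_right_mono)
  also have "\<dots> \<le> (\<Sum>j\<in>members l. n * sqrt (lam a / w)) / cluster_size l"
    using eigenvector_cluster_oscillation[OF l] assms size by (intro divide_right_mono sum_mono) auto
  also have "\<dots> = n * sqrt (lam a / w)" using size by simp
  finally show ?thesis .
qed

lemma deviation_L2_le: "i < n \<Longrightarrow> L2_set (\<lambda>a. deviation a i) {..<k} \<le> n * sqrt (real k * real n * \<epsilon>)"
  using deviation_abs_le k_le_n by (intro L2_set_le_of_eigenvalue_bounds) auto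

lemma residual_nonneg: "0 \<le> residual"
  unfolding residual_def by (intro sum_nonneg) auto

lemma residual_le: "residual \<le> real k * real n ^ 4 * \<epsilon>"
proof -
  have "residual \<le> (\<Sum>i<n. (n * sqrt (real k * real n * \<epsilon>))\<^sup>2)"
    unfolding residual_def
  proof (intro sum_mono)
    fix i assume "i \<in> {..<n}"
    then have "(L2_set (\<lambda>a. deviation a i) {..<k})\<^sup>2 \<le> (n * sqrt (real k * real n * \<epsilon>))\<^sup>2"
      using deviation_L2_le by (intro power_mono) auto
    then show "(\<Sum>a<k. (deviation a i)\<^sup>2) \<le> (n * sqrt (real k * real n * \<epsilon>))\<^sup>2"
      by (simp add: L2_set_def sum_nonneg)
  qed
  also have "\<dots> = n * (n\<^sup>2 * (real k * real n * \<epsilon>))"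
    using eps_nonneg by (simp add: power_mult_distrib)
  also have "\<dots> = real k * real n ^ 4 * \<epsilon>"
    by (simp add: eval_nat_numeral mult_ac)
  finally show ?thesis .
qed

definition scaled_mean :: "nat \<Rightarrow> nat \<Rightarrow> real" where
  "scaled_mean a l = sqrt (cluster_size l) * cluster_mean a l"

text \<open>Deviations sum to zero on each cluster, so they are orthogonal to the cluster means.\<close>
lemma inner_product_split:
  assumes "a < n" "b < n"
  shows "(\<Sum>l<k. scaled_mean a l * scaled_mean b l) + (\<Sum>i<n. deviation a i * deviation b i)
           = (if a = b then 1 else 0)"
proof -
  have cluster: "(\<Sum>i\<in>members l. U i a * U i b)
      = scaled_mean a l * scaled_mean b l + (\<Sum>i\<in>members l. deviation a i * deviation b i)" for l
  proof -
    let ?ma = "cluster_mean a l" and ?mb = "cluster_mean b l"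
    have "(\<Sum>i\<in>members l. U i a * U i b)
        = (\<Sum>i\<in>members l. (?ma + deviation a i) * (?mb + deviation b i))"
      by (intro sum.cong) (auto simp: deviation_def mem_members)
    also have "\<dots> = cluster_size l * (?ma * ?mb) + ?ma * (\<Sum>i\<in>members l. deviation b i)
        + ?mb * (\<Sum>i\<in>members l. deviation a i) + (\<Sum>i\<in>members l. deviation a i * deviation b i)"
      by (simp add: algebra_simps sum.distrib sum_distrib_left)
    finally show ?thesis
      by (simp add: sum_deviation_cluster scaled_mean_def algebra_simps)
  qed
  have "(if a = b then 1 else 0) = (\<Sum>i<n. U i a * U i b)"
    using columns_orthonormal assms by simp
  also have "\<dots> = (\<Sum>l<k. scaled_mean a l * scaled_mean b l) + (\<Sum>i<n. deviation a i * deviation b i)"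
    by (simp add: sum_over_clusters[of "\<lambda>i. U i a * U i b"] cluster sum.distrib
        sum_over_clusters[of "\<lambda>i. deviation a i * deviation b i"])
  finally show ?thesis by simp
qed

text \<open>The \<open>k \<times> k\<close> matrix of scaled means is nearly orthogonal: by the splitting above its
  Gram matrix deviates from the identity by the Gram matrix of the deviations, whose
  Frobenius norm is at most the residual.\<close>
lemma scaled_mean_gram_close:
  assumes "l < k" "l' < k"
  shows "\<bar>(\<Sum>a<k. scaled_mean a l * scaled_mean a l') - (if l = l' then 1 else 0)\<bar> \<le> residual"
proof -
  let ?c = scaled_mean and ?R = "\<lambda>a b. \<Sum>i<n. deviation a i * deviation b i"
  let ?G = "\<lambda>l l'. (\<Sum>a<k. ?c a l * ?c a l') - (if l = l' then 1 else 0)"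
  have "(\<Sum>a<k. \<Sum>b<k. ((\<Sum>l<k. ?c a l * ?c b l) - (if a = b then 1 else 0))\<^sup>2)
      = (\<Sum>a<k. \<Sum>b<k. (?R a b)\<^sup>2)"
  proof (intro sum.cong refl)
    fix a b assume "a \<in> {..<k}" "b \<in> {..<k}"
    then have "(\<Sum>l<k. ?c a l * ?c b l) - (if a = b then 1 else 0) = - ?R a b"
      using inner_product_split[of a b] k_le_n by fastforce
    then show "((\<Sum>l<k. ?c a l * ?c b l) - (if a = b then 1 else 0))\<^sup>2 = (?R a b)\<^sup>2"
      by simp
  qed
  also have "\<dots> \<le> (\<Sum>a<k. \<Sum>b<k. (\<Sum>i<n. (deviation a i)\<^sup>2) * (\<Sum>i<n. (deviation b i)\<^sup>2))"
    by (intro sum_mono Cauchy_Schwarz_ineq_sum)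
  also have "\<dots> = residual\<^sup>2"
    unfolding residual_def by (subst (2) sum.swap) (simp add: power2_eq_square sum_product)
  finally have "(\<Sum>i<k. \<Sum>j<k. (?G i j)\<^sup>2) \<le> residual\<^sup>2"
    using gram_deviation_transpose[of "\<lambda>i a. ?c a i" k] by simp
  moreover have "(?G l l')\<^sup>2 \<le> (\<Sum>j<k. (?G l j)\<^sup>2)"
    using assms by (intro member_le_sum) auto
  moreover have "(\<Sum>j<k. (?G l j)\<^sup>2) \<le> (\<Sum>i<k. \<Sum>j<k. (?G i j)\<^sup>2)"
    using assms by (intro member_le_sum[where f="\<lambda>i. \<Sum>j<k. (?G i j)\<^sup>2"]) (auto intro: sum_nonneg)
  ultimately have "(?G l l')\<^sup>2 \<le> residual\<^sup>2" by linarith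
  then show ?thesis
    using residual_nonneg by (metis abs_le_square_iff abs_of_nonneg)
qed

lemma cluster_means_separated:
  assumes "l < k" "l' < k" "l \<noteq> l'"
  shows "(1 - 2 * residual) * (1 / cluster_size l + 1 / cluster_size l')
           \<le> (\<Sum>a<k. (cluster_mean a l - cluster_mean a l')\<^sup>2)"
proof -
  define x where "x = 1 / sqrt (cluster_size l)"
  define y where "y = 1 / sqrt (cluster_size l')"
  have size: "0 < real (cluster_size l)" "0 < real (cluster_size l')" using cluster_size_pos assms by auto
  then have xy: "0 < x" "0 < y" by (simp_all add: x_def y_def)
  have mean: "cluster_mean a l = scaled_mean a l * x" "cluster_mean a l' = scaled_mean a l' * y" for a
    using size by (simp_all add: scaled_mean_def x_def y_def)
  have "(1 - 2 * residual) * (x\<^sup>2 + y\<^sup>2)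
     \<le> x\<^sup>2 * (\<Sum>a<k. scaled_mean a l * scaled_mean a l) + y\<^sup>2 * (\<Sum>a<k. scaled_mean a l' * scaled_mean a l')
        - 2 * x * y * (\<Sum>a<k. scaled_mean a l * scaled_mean a l')"
    using scaled_mean_gram_close[of l l] scaled_mean_gram_close[of l' l']
      scaled_mean_gram_close[of l l'] assms residual_nonneg xy
    by (intro perturbed_sum_squares_ge) (auto simp: abs_le_iff)
  also have "\<dots> = (\<Sum>a<k. (cluster_mean a l - cluster_mean a l')\<^sup>2)"
    by (simp add: mean power2_eq_square algebra_simps sum.distrib sum_subtractf sum_distrib_left)
  finally show ?thesis
    using size by (simp add: x_def y_def power_divide)
qed

lemma cluster_means_L2_ge:
  assumes "l < k" "l' < k" "l \<noteq> l'"
  shows "sqrt (2 / n) * (1 - 2 * residual)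
           \<le> L2_set (\<lambda>a. cluster_mean a l - cluster_mean a l') {..<k}"
proof (cases "0 \<le> 1 - 2 * residual")
  case False
  then show ?thesis by (simp add: mult_nonneg_nonpos order_trans[OF _ L2_set_nonneg])
next
  case True
  have "1 - 2 * residual \<le> sqrt (1 - 2 * residual)"
    using True residual_nonneg by (intro le_sqrt_of_unit_interval) auto
  then have "sqrt (2 / n) * (1 - 2 * residual) \<le> sqrt (2 / n) * sqrt (1 - 2 * residual)"
    by (intro mult_left_mono) auto
  also have "\<dots> = sqrt ((1 - 2 * residual) * (2 / n))"
    by (simp only: real_sqrt_mult[symmetric] mult.commute)
  also have "\<dots> \<le> L2_set (\<lambda>a. cluster_mean a l - cluster_mean a l') {..<k}"
    unfolding L2_set_def
  proof (rule real_sqrt_le_mono)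
    have size: "0 < real (cluster_size l)" "0 < real (cluster_size l')" using cluster_size_pos assms by auto
    have "1 / n \<le> 1 / real (cluster_size l)" "1 / n \<le> 1 / real (cluster_size l')"
      using size cluster_size_le[of l] cluster_size_le[of l'] by (auto intro!: divide_left_mono)
    then have "(1 - 2 * residual) * (2 / n) \<le> (1 - 2 * residual) * (1 / cluster_size l + 1 / cluster_size l')"
      using True by (intro mult_left_mono) auto
    also have "\<dots> \<le> (\<Sum>a<k. (cluster_mean a l - cluster_mean a l')\<^sup>2)"
      by (rule cluster_means_separated[OF assms])
    finally show "(1 - 2 * residual) * (2 / n) \<le> (\<Sum>a<k. (cluster_mean a l - cluster_mean a l')\<^sup>2)" .
  qed
  finally show ?thesis .
qed

text \<open>Rows from different clusters are as far apart as the corresponding cluster means,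
  up to the deviations of the two rows from their means.\<close>
lemma row_dist_other_cluster:
  assumes "i < n" "j < n" "cluster i \<noteq> cluster j"
  shows "sqrt (2 / n) - 2 * sqrt (2 / n) * (real k * real n ^ 4 * \<epsilon>) - 2 * n * sqrt (real k * real n * \<epsilon>)
           \<le> row_dist k U i j"
proof -
  let ?L2 = "\<lambda>f. L2_set f {..<k}"
  have "?L2 (\<lambda>a. cluster_mean a (cluster i) - cluster_mean a (cluster j))
      = ?L2 (\<lambda>a. (U i a - U j a) + (deviation a j + - deviation a i))"
    by (simp add: deviation_def)
  also have "\<dots> \<le> ?L2 (\<lambda>a. U i a - U j a) + ?L2 (\<lambda>a. deviation a j + - deviation a i)"
    by (rule L2_set_triangle_ineq)
  also have "\<dots> \<le> row_dist k U i j + (?L2 (\<lambda>a. deviation a j) + ?L2 (\<lambda>a. - deviation a i))"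
    using L2_set_triangle_ineq[of "\<lambda>a. deviation a j" "\<lambda>a. - deviation a i"]
    by (simp add: row_dist_def L2_set_def)
  also have "\<dots> \<le> row_dist k U i j + 2 * n * sqrt (real k * real n * \<epsilon>)"
    using deviation_L2_le[OF \<open>i < n\<close>] deviation_L2_le[OF \<open>j < n\<close>] by (simp add: L2_set_def)
  finally have "sqrt (2 / n) * (1 - 2 * residual) \<le> row_dist k U i j + 2 * n * sqrt (real k * real n * \<epsilon>)"
    using cluster_means_L2_ge[of "cluster i" "cluster j"] assms cluster_less by fastforce
  moreover have "sqrt (2 / n) * residual \<le> sqrt (2 / n) * (real k * real n ^ 4 * \<epsilon>)"
    using residual_le by (intro mult_left_mono) auto
  ultimately show ?thesis by (simp add: algebra_simps)
qed

end

section \<open>Kernel graphs of clustered point sets\<close>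

lemma set_dist_nonneg: "0 \<le> set_dist S T"
  unfolding set_dist_def by (rule INF_greatest) simp

lemma set_dist_le_dist: "p \<in> S \<Longrightarrow> q \<in> T \<Longrightarrow> set_dist S T \<le> ereal (dist p q)"
  unfolding set_dist_def by (rule INF_lower2[of "(p, q)"]) auto

lemma set_dist_attained:
  assumes "finite S" "finite T" "S \<noteq> {}" "T \<noteq> {}"
  shows "\<exists>p\<in>S. \<exists>q\<in>T. set_dist S T = ereal (dist p q)"
proof -
  let ?D = "(\<lambda>pq. ereal (dist (fst pq) (snd pq))) ` (S \<times> T)"
  have "finite ?D" "?D \<noteq> {}" using assms by auto
  then have "Min ?D \<in> ?D" "set_dist S T = Min ?D"
    by (rule Min_in, simp add: Min_Inf set_dist_def)
  then obtain pq where "pq \<in> S \<times> T" "set_dist S T = ereal (dist (fst pq) (snd pq))"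
    by auto
  then show ?thesis by (auto simp: mem_Times_iff)
qed

lemma connected_at_dist_close_pair:
  assumes "connected_at_dist d S" "finite S" "S' \<subseteq> S" "S' \<noteq> {}" "S' \<noteq> S"
  shows "\<exists>p\<in>S'. \<exists>q\<in>S - S'. dist p q \<le> d"
proof -
  have parts: "S - S' \<noteq> {}" "S' \<union> (S - S') = S" "S' \<inter> (S - S') = {}"
    using assms(3,5) by auto
  have "\<not> (S' \<noteq> {} \<and> S - S' \<noteq> {} \<and> S' \<union> (S - S') = S \<and> S' \<inter> (S - S') = {}
      \<and> set_dist S' (S - S') > ereal d)"
    using assms(1) unfolding connected_at_dist_def by (rule contrapos_nn) (rule exI)+
  then have "set_dist S' (S - S') \<le> ereal d"
    using parts assms(4) by (simp add: not_less)
  moreover have "finite S'" "finite (S - S')"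
    using assms(2,3) finite_subset by auto
  then obtain p q where "p \<in> S'" "q \<in> S - S'" "set_dist S' (S - S') = ereal (dist p q)"
    using set_dist_attained[of S' "S - S'"] assms(4) parts(1) by blast
  ultimately show ?thesis by auto
qed

lemma connected_at_negative_dist:
  assumes "connected_at_dist d S" "d < 0" "p \<in> S" "q \<in> S"
  shows "p = q"
proof (rule ccontr)
  assume "p \<noteq> q"
  have "ereal d < 0" using \<open>d < 0\<close> by simp
  then have "ereal d < set_dist {p} (S - {p})"
    using set_dist_nonneg by (rule less_le_trans)
  moreover have "{p} \<noteq> {}" "S - {p} \<noteq> {}" "{p} \<union> (S - {p}) = S" "{p} \<inter> (S - {p}) = {}"
    using assms \<open>p \<noteq> q\<close> by auto
  ultimately have "\<exists>S1 S2. S1 \<noteq> {} \<and> S2 \<noteq> {} \<and> S1 \<union> S2 = S \<and> S1 \<inter> S2 = {}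
      \<and> set_dist S1 S2 > ereal d"
    by (intro exI[of _ "{p}"] exI[of _ "S - {p}"]) simp
  then show False
    using assms(1) unfolding connected_at_dist_def by (elim notE)
qed

lemma decay_constant_ge_one:
  fixes K :: "real \<Rightarrow> real"
  assumes "\<forall>s t. 0 \<le> t \<longrightarrow> t \<le> s \<longrightarrow> K s / K t \<le> A * exp (- ((s - t) powr \<alpha>))" "K 0 \<noteq> 0"
  shows "1 \<le> A"
  using assms(1)[rule_format, of 0 0] assms(2) by simp

text \<open>With \<open>N = A n\<^sup>z\<^sup>/\<^sup>3\<close> this turns the bound on \<open>\<sigma>\<close> into the factor \<open>n\<^sup>-\<^sup>z\<^sup>/\<^sup>3\<close>.\<close>
lemma kernel_ratio_le_beyond_gap:
  fixes K :: "real \<Rightarrow> real"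
  assumes decay: "\<forall>s t. 0 \<le> t \<longrightarrow> t \<le> s \<longrightarrow> K s / K t \<le> A * exp (- ((s - t) powr \<alpha>))"
    and "0 < A" "0 < \<alpha>" "1 < N" "0 \<le> t" and gap: "t + ln N powr (1 / \<alpha>) \<le> s"
  shows "K s / K t \<le> A / N"
proof -
  have "0 < ln N" using \<open>1 < N\<close> by simp
  then have "ln N = (ln N powr (1 / \<alpha>)) powr \<alpha>"
    using \<open>0 < \<alpha>\<close> by (simp add: powr_powr)
  also have "\<dots> \<le> (s - t) powr \<alpha>"
    using gap \<open>0 < \<alpha>\<close> by (intro powr_mono2) auto
  finally have "exp (ln N) \<le> exp ((s - t) powr \<alpha>)" by simp
  then have "exp (- ((s - t) powr \<alpha>)) \<le> 1 / N"
    using \<open>1 < N\<close> by (simp add: exp_minus field_simps)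
  then have "A * exp (- ((s - t) powr \<alpha>)) \<le> A / N"
    using \<open>0 < A\<close> mult_left_mono[of _ "1 / N" A] by simp
  moreover have "t \<le> s"
    using gap powr_ge_zero[of "ln N" "1 / \<alpha>"] by linarith
  ultimately show ?thesis
    using decay \<open>0 \<le> t\<close> by (meson order_trans)
qed

locale point_partition =
  fixes n k :: nat and x :: "nat \<Rightarrow> 'a::real_normed_vector" and C :: "nat \<Rightarrow> 'a set"
  assumes inj: "inj_on x {..<n}"
    and nonempty: "\<forall>l<k. C l \<noteq> {}"
    and cover: "(\<Union>l<k. C l) = x ` {..<n}"
    and disjoint: "\<forall>l<k. \<forall>m<k. l \<noteq> m \<longrightarrow> C l \<inter> C m = {}"
begin

definition cluster :: "nat \<Rightarrow> nat" where
  "cluster i = (THE l. l < k \<and> x i \<in> C l)"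

lemma cluster_eqI:
  assumes "l < k" "x i \<in> C l"
  shows "cluster i = l"
  unfolding cluster_def
proof (rule the_equality)
  fix l' assume "l' < k \<and> x i \<in> C l'"
  then show "l' = l" using assms disjoint by blast
qed (use assms in simp)

lemma cluster_less_mem:
  assumes "i < n"
  shows "cluster i < k" "x i \<in> C (cluster i)"
proof -
  obtain l where "l < k" "x i \<in> C l" using cover assms by blast
  then show "cluster i < k" "x i \<in> C (cluster i)" using cluster_eqI by auto
qed

lemma mem_C_iff: "i < n \<Longrightarrow> l < k \<Longrightarrow> x i \<in> C l \<longleftrightarrow> cluster i = l"
  using cluster_eqI[of l i] cluster_less_mem[of i] by blast

lemma C_subset: "l < k \<Longrightarrow> C l \<subseteq> x ` {..<n}"
  using cover by blast

lemma C_eq_image: "l < k \<Longrightarrow> C l = x ` {i. i < n \<and> cluster i = l}"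
proof
  assume "l < k"
  show "C l \<subseteq> x ` {i. i < n \<and> cluster i = l}"
  proof
    fix p assume "p \<in> C l"
    then obtain i where "i < n" "p = x i" using C_subset[OF \<open>l < k\<close>] by auto
    then show "p \<in> x ` {i. i < n \<and> cluster i = l}"
      using \<open>p \<in> C l\<close> \<open>l < k\<close> mem_C_iff by auto
  qed
  show "x ` {i. i < n \<and> cluster i = l} \<subseteq> C l"
    using cluster_less_mem by auto
qed

lemma cluster_surj: "l < k \<Longrightarrow> \<exists>i<n. cluster i = l"
  using nonempty C_eq_image by fastforce

definition separation :: ereal where
  "separation = Min ((\<lambda>m. set_dist (C m) (x ` {..<n} - C m)) ` {..<k})"

lemma separation_le_norm:
  assumes "i < n" "j < n" "cluster i \<noteq> cluster j"
  shows "separation \<le> ereal (norm (x i - x j))"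
proof -
  let ?l = "cluster i"
  have "x j \<in> x ` {..<n} - C ?l"
    using assms mem_C_iff cluster_less_mem by auto
  then have "set_dist (C ?l) (x ` {..<n} - C ?l) \<le> ereal (norm (x i - x j))"
    using cluster_less_mem[OF \<open>i < n\<close>] set_dist_le_dist by (metis dist_norm)
  moreover have "separation \<le> set_dist (C ?l) (x ` {..<n} - C ?l)"
    unfolding separation_def using cluster_less_mem[OF \<open>i < n\<close>] by (intro Min_le) auto
  ultimately show ?thesis by (rule order_trans[rotated])
qed

lemma cluster_edge_crossing:
  assumes "connected_at_dist d (C l)" "l < k"
    and "S \<subseteq> {i. i < n \<and> cluster i = l}" "S \<noteq> {}" "S \<noteq> {i. i < n \<and> cluster i = l}"
  shows "\<exists>u\<in>S. \<exists>v\<in>{i. i < n \<and> cluster i = l} - S. norm (x u - x v) \<le> d"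
proof -
  let ?I = "{i. i < n \<and> cluster i = l}"
  have "inj_on x ?I" using inj by (rule inj_on_subset) auto
  then have "x ` S \<subseteq> C l" "x ` S \<noteq> C l"
    using assms(3-5) C_eq_image[OF \<open>l < k\<close>] by (auto simp: inj_on_image_eq_iff)
  then obtain p q where "p \<in> x ` S" "q \<in> C l - x ` S" "dist p q \<le> d"
    using connected_at_dist_close_pair[OF assms(1)] C_subset[OF \<open>l < k\<close>] assms(4)
    by (metis finite_imageI finite_lessThan finite_subset image_is_empty)
  then show ?thesis
    using C_eq_image[OF \<open>l < k\<close>] by (auto simp: dist_norm)
qed

lemma affinity_between_clusters_le:
  fixes K :: "real \<Rightarrow> real"
  assumes K_pos: "\<forall>t\<ge>0. K t > 0"
    and decay: "\<forall>s t. 0 \<le> t \<longrightarrow> t \<le> s \<longrightarrow> K s / K t \<le> A * exp (- ((s - t) powr \<alpha>))"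
    and "0 < A" "0 < \<alpha>" "1 < N" "0 < \<sigma>" "0 \<le> D"
    and sigma: "ereal \<sigma> < (separation - ereal D) * ereal (ln N powr (- 1 / \<alpha>))"
    and "i < n" "j < n" "cluster i \<noteq> cluster j"
  shows "affinity K \<sigma> x i j \<le> A / N * K (D / \<sigma>)"
proof -
  define L where "L = ln N powr (1 / \<alpha>)"
  have L: "0 < L" using \<open>1 < N\<close> by (simp add: L_def)
  have "separation \<le> ereal (norm (x i - x j))"
    using separation_le_norm assms(9-11) .
  moreover have "separation \<noteq> - \<infinity>"
    using sigma \<open>1 < N\<close> by auto
  ultimately obtain r where r: "separation = ereal r" "r \<le> norm (x i - x j)"
    by (cases separation) auto
  have "ln N powr (- 1 / \<alpha>) = 1 / L"
    using \<open>1 < N\<close> by (simp add: L_def powr_minus_divide[symmetric])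
  then have "\<sigma> < (r - D) / L"
    using sigma r by simp
  then have "D + L * \<sigma> \<le> norm (x i - x j)"
    using L r(2) by (simp add: field_simps)
  then have "(D + L * \<sigma>) / \<sigma> \<le> norm (x i - x j) / \<sigma>"
    using \<open>0 < \<sigma>\<close> by (simp add: divide_right_mono)
  then have "D / \<sigma> + L \<le> norm (x i - x j) / \<sigma>"
    using \<open>0 < \<sigma>\<close> by (simp add: add_divide_distrib)
  then have "K (norm (x i - x j) / \<sigma>) / K (D / \<sigma>) \<le> A / N"
    using assms by (intro kernel_ratio_le_beyond_gap[OF decay]) (simp_all add: L_def)
  then show ?thesis
    using K_pos assms(6,7) by (simp add: affinity_def divide_le_eq)
qed

lemma spectral_clusters_affinity:
  fixes K :: "real \<Rightarrow> real"
  assumes K_pos: "\<forall>t\<ge>0. K t > 0"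
    and K_mono: "\<forall>s t. 0 \<le> s \<longrightarrow> s \<le> t \<longrightarrow> K t \<le> K s"
    and decay: "\<forall>s t. 0 \<le> t \<longrightarrow> t \<le> s \<longrightarrow> K s / K t \<le> A * exp (- ((s - t) powr \<alpha>))"
    and "0 < A" "0 < \<alpha>" "1 < N" "0 < \<sigma>"
    and conn: "\<forall>l<k. connected_at_dist (dl l) (C l)"
    and D: "D = Max (dl ` {..<k})" "0 \<le> D"
    and sigma: "ereal \<sigma> < (separation - ereal D) * ereal (ln N powr (- 1 / \<alpha>))"
    and eig: "ordered_orthonormal_eigenbasis n (laplacian n K \<sigma> x) U lam"
  shows "spectral_clusters n k cluster (affinity K \<sigma> x) U lam (K (D / \<sigma>)) (A / N)"
proof
  show "cluster i < k" if "i < n" for i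
    using cluster_less_mem that by blast
  show "\<exists>i<n. cluster i = l" if "l < k" for l
    using cluster_surj that .
  show "affinity K \<sigma> x i j = affinity K \<sigma> x j i" for i j
    by (simp add: affinity_def norm_minus_commute)
  show "0 \<le> affinity K \<sigma> x i j" for i j
    using K_pos \<open>0 < \<sigma>\<close> by (simp add: affinity_def less_imp_le)
  show "ordered_orthonormal_eigenbasis n (graph_laplacian n (affinity K \<sigma> x)) U lam"
    using eig by (simp add: laplacian_eq_graph_laplacian)
  show "0 < K (D / \<sigma>)"
    using K_pos D(2) \<open>0 < \<sigma>\<close> by simp
  show "0 \<le> A / N"
    using \<open>0 < A\<close> \<open>1 < N\<close> by simp
  show "affinity K \<sigma> x i j \<le> A / N * K (D / \<sigma>)"
    if "i < n" "j < n" "cluster i \<noteq> cluster j" for i j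
    using affinity_between_clusters_le[OF K_pos decay] assms(4-7) D(2) sigma that .
  show "\<exists>u\<in>S. \<exists>v\<in>{i. i < n \<and> cluster i = l} - S. K (D / \<sigma>) \<le> affinity K \<sigma> x u v"
    if l: "l < k" and S: "S \<subseteq> {i. i < n \<and> cluster i = l}" "S \<noteq> {}"
      "S \<noteq> {i. i < n \<and> cluster i = l}" for l S
  proof -
    obtain u v where uv: "u \<in> S" "v \<in> {i. i < n \<and> cluster i = l} - S" "norm (x u - x v) \<le> dl l"
      using cluster_edge_crossing[OF conn[rule_format, OF l] l S] by blast
    have "dl l \<le> D" using D(1) \<open>l < k\<close> by simp
    then have "norm (x u - x v) / \<sigma> \<le> D / \<sigma>"
      using uv(3) \<open>0 < \<sigma>\<close> by (simp add: divide_right_mono)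
    then have "K (D / \<sigma>) \<le> affinity K \<sigma> x u v"
      using K_mono \<open>0 < \<sigma>\<close> by (simp add: affinity_def)
    then show ?thesis
      using uv(1,2) by blast
  qed
qed

lemma row_dist_bounds_of_spectral_clusters:
  assumes "spectral_clusters n k cluster W U lam w \<epsilon>"
    and "n * sqrt (real k * real n * \<epsilon>) \<le> b"
    and "2 * sqrt (2 / n) * (real k * real n ^ 4 * \<epsilon>) + 2 * n * sqrt (real k * real n * \<epsilon>) \<le> b'"
  shows "(\<forall>l<k. \<forall>i<n. \<forall>j<n. x i \<in> C l \<and> x j \<in> C l \<longrightarrow> row_dist k U i j \<le> b) \<and>
         (\<forall>l<k. \<forall>i<n. \<forall>j<n. x i \<in> C l \<and> x j \<notin> C l \<longrightarrow> row_dist k U i j \<ge> sqrt (2 / n) - b')"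
proof -
  interpret spectral_clusters n k cluster W U lam w \<epsilon> by (rule assms(1))
  show ?thesis
  proof (intro conjI allI impI)
    fix l i j assume "l < k" "i < n" "j < n" "x i \<in> C l \<and> x j \<in> C l"
    then have "cluster i = cluster j" using mem_C_iff by simp
    then show "row_dist k U i j \<le> b"
      using row_dist_same_cluster[OF _ \<open>i < n\<close> \<open>j < n\<close>] assms(2) by linarith
  next
    fix l i j assume "l < k" "i < n" "j < n" "x i \<in> C l \<and> x j \<notin> C l"
    then have "cluster i \<noteq> cluster j" using mem_C_iff by simp
    then show "sqrt (2 / n) - b' \<le> row_dist k U i j"
      using row_dist_other_cluster[OF \<open>i < n\<close> \<open>j < n\<close>] assms(3) by linarith
  qed
qed

lemma cluster_bij_if_singletons:
  assumes "\<And>l i j. l < k \<Longrightarrow> i < n \<Longrightarrow> j < n \<Longrightarrow> x i \<in> C l \<Longrightarrow> x j \<in> C l \<Longrightarrow> i = j"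
  shows "bij_betw cluster {..<n} {..<k}"
proof (rule bij_betw_imageI)
  show "inj_on cluster {..<n}"
    using assms cluster_less_mem by (metis inj_onI lessThan_iff)
  show "cluster ` {..<n} = {..<k}"
    using cluster_less_mem cluster_surj by fastforce
qed

lemma row_dist_bounds_of_singleton_clusters:
  assumes conn: "\<forall>l<k. connected_at_dist (dl l) (C l)" and neg: "Max (dl ` {..<k}) < 0"
    and eig: "ordered_orthonormal_eigenbasis n L U lam"
    and "0 \<le> b" "0 \<le> b'"
  shows "(\<forall>l<k. \<forall>i<n. \<forall>j<n. x i \<in> C l \<and> x j \<in> C l \<longrightarrow> row_dist k U i j \<le> b) \<and>
         (\<forall>l<k. \<forall>i<n. \<forall>j<n. x i \<in> C l \<and> x j \<notin> C l \<longrightarrow> row_dist k U i j \<ge> sqrt (2 / n) - b')"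
proof -
  have same: "i = j" if "l < k" "i < n" "j < n" "x i \<in> C l" "x j \<in> C l" for l i j
  proof -
    have "dl l \<le> Max (dl ` {..<k})" using \<open>l < k\<close> by simp
    then have "dl l < 0" using neg by linarith
    then show ?thesis
      using connected_at_negative_dist[of "dl l" "C l" "x i" "x j"] conn inj that
      by (auto dest: inj_onD)
  qed
  then have "k = n"
    using bij_betw_same_card[OF cluster_bij_if_singletons] by simp
  then have other: "row_dist k U i j = sqrt 2" if "i < n" "j < n" "i \<noteq> j" for i j
    using row_dist_orthonormal[of n U i j] eig that by (simp add: ordered_orthonormal_eigenbasis_def)
  show ?thesis
  proof (intro conjI allI impI)
    fix l i j assume "l < k" "i < n" "j < n" "x i \<in> C l \<and> x j \<in> C l"
    then show "row_dist k U i j \<le> b"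
      using same[of l i j] \<open>0 \<le> b\<close> by (simp add: row_dist_def)
  next
    fix l i j assume "l < k" "i < n" "j < n" "x i \<in> C l \<and> x j \<notin> C l"
    then have "row_dist k U i j = sqrt 2" using other[of i j] by auto
    moreover have "sqrt (2 / n) \<le> sqrt 2"
      using \<open>i < n\<close> by (simp add: divide_le_eq)
    ultimately show "sqrt (2 / n) - b' \<le> row_dist k U i j"
      using \<open>0 \<le> b'\<close> by linarith
  qed
qed

end

section \<open>Numerical estimates\<close>

lemma mult_powr_self: "0 < (x::real) \<Longrightarrow> x * x powr a = x powr (1 + a)"
  by (simp add: powr_add)

lemma within_bound_powr:
  fixes z :: real and n k :: nat
  assumes n: "0 < real n"
  shows "n * sqrt (real k * real n * n powr (- z / 3)) = sqrt k * n powr (3 / 2 - z / 6)"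
proof -
  have "real k * real n * n powr (- z / 3) = real k * n powr (1 + - z / 3)"
    using mult_powr_self[OF n, of "- z / 3"] by (simp only: mult.assoc)
  then have "n * sqrt (real k * real n * n powr (- z / 3)) = sqrt k * (n * n powr ((1 + - z / 3) / 2))"
    using n by (simp only: real_sqrt_mult powr_half_sqrt_powr[symmetric] of_nat_0_le_iff less_imp_le mult_ac)
  also have "\<dots> = sqrt k * n powr (1 + (1 + - z / 3) / 2)"
    using n by (simp only: mult_powr_self)
  also have "1 + (1 + - z / 3) / 2 = 3 / 2 - z / 6" by (simp add: field_simps)
  finally show ?thesis .
qed

lemma power_div_powr_powr:
  fixes x y :: real
  assumes "0 < x" "0 < y"
  shows "(x ^ m / y powr a) powr b = x powr (m * b) * y powr (- (a * b))"
proof -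
  have "(x ^ m / y powr a) powr b = (x powr m) powr b / (y powr a) powr b"
    using assms by (simp add: powr_divide powr_realpow)
  also have "\<dots> = x powr (m * b) * y powr (- (a * b))"
    using assms by (simp add: powr_powr powr_minus divide_inverse)
  finally show ?thesis .
qed

lemma within_bound_eq_root:
  fixes z :: real and n k :: nat
  assumes "0 < n" "0 < k"
  shows "n * sqrt (real k * real n * n powr (- z / 3)) = (real k ^ 3 / real n powr (z - 9)) powr (1 / 6)"
proof -
  have "- ((z - 9) * (1 / 6)) = 3 / 2 - z / 6" "real (3::nat) * (1 / 6) = 1 / 2"
    by (simp_all add: field_simps)
  then have "(real k ^ 3 / real n powr (z - 9)) powr (1 / 6) = k powr (1 / 2) * n powr (3 / 2 - z / 6)"
    using assms by (simp only: power_div_powr_powr of_nat_0_less_iff)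
  then show ?thesis
    using assms within_bound_powr[of n k z] by (simp add: powr_half_sqrt)
qed

lemma between_bound_first_term_powr:
  fixes z :: real and n :: nat
  assumes "0 < n"
  shows "sqrt (2 / n) * (real n ^ 4 * n powr (- z / 3)) = sqrt 2 * n powr (7 / 2 - z / 3)"
proof -
  have n: "0 < real n" using assms by simp
  have "n powr (- (1 / 2)) = inverse (sqrt n)"
    using n by (simp add: powr_minus powr_half_sqrt)
  then have "sqrt (2 / n) = sqrt 2 * n powr (- (1 / 2))"
    by (simp only: real_sqrt_divide divide_inverse[of "sqrt 2"])
  moreover have "real n ^ 4 = n powr 4"
    using n by (simp add: powr_realpow)
  moreover have "n powr (- (1 / 2)) * (n powr 4 * n powr (- z / 3)) = n powr (- (1 / 2) + (4 + - z / 3))"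
    by (simp only: powr_add)
  moreover have "- (1 / 2) + (4 + - z / 3) = 7 / 2 - z / 3"
    by (simp add: field_simps)
  ultimately show ?thesis by (simp only: mult.assoc)
qed

lemma between_bound_le_root:
  fixes z :: real and n k :: nat
  assumes "0 < n" "0 < k" "15 \<le> z"
  shows "2 * sqrt (2 / n) * (real k * real n ^ 4 * n powr (- z / 3))
           + 2 * n * sqrt (real k * real n * n powr (- z / 3))
         \<le> 6 * (real k ^ 27 / real n powr (z - 15)) powr (1 / 24)"
proof -
  have n: "1 \<le> real n" and k: "1 \<le> real k" using assms by simp_all
  define P where "P = n powr (5 / 8 - z / 24)"
  define Q where "Q = k powr (9 / 8)"
  have "- ((z - 15) * (1 / 24)) = 5 / 8 - z / 24" "real (27::nat) * (1 / 24) = 9 / 8"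
    by (simp_all add: field_simps)
  then have rhs: "(real k ^ 27 / real n powr (z - 15)) powr (1 / 24) = Q * P"
    using assms unfolding P_def Q_def by (simp only: power_div_powr_powr of_nat_0_less_iff)
  have "sqrt (2 / n) * (real k * real n ^ 4 * n powr (- z / 3)) = sqrt 2 * real k * n powr (7 / 2 - z / 3)"
    using between_bound_first_term_powr[OF assms(1), of z] by (simp add: mult_ac)
  also have "\<dots> \<le> 2 * Q * P"
  proof (intro mult_mono)
    show "sqrt 2 \<le> 2" using real_sqrt_le_mono[of 2 4] by simp
    show "real k \<le> Q" using k powr_mono[of 1 "9 / 8" "real k"] by (simp add: Q_def)
    show "n powr (7 / 2 - z / 3) \<le> P" using n assms(3) by (simp add: P_def powr_mono)
  qed (auto simp: Q_def)
  finally have first: "sqrt (2 / n) * (real k * real n ^ 4 * n powr (- z / 3)) \<le> 2 * Q * P" .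
  have second: "n * sqrt (real k * real n * n powr (- z / 3)) \<le> Q * P"
  proof -
    have "sqrt k \<le> Q"
      using k powr_mono[of "1 / 2" "9 / 8" "real k"] by (simp add: Q_def powr_half_sqrt)
    moreover have "n powr (3 / 2 - z / 6) \<le> P"
      using n assms(3) by (simp add: P_def powr_mono)
    ultimately have "sqrt k * n powr (3 / 2 - z / 6) \<le> Q * P"
      by (intro mult_mono) (auto simp: Q_def)
    then show ?thesis
      using within_bound_powr[of n k z] assms by simp
  qed
  show ?thesis
    using first second unfolding rhs mult.assoc by linarith
qed

lemma size_and_exponent_of_bound:
  fixes z :: real and n k :: nat
  assumes "81 * real k ^ 15 \<le> real n powr (z - 15)" "0 < k"
  shows "2 \<le> n" "15 \<le> z"
proof -
  have "1 \<le> real k ^ 15" using \<open>0 < k\<close> by simp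
  then have big: "1 < real n powr (z - 15)" using assms(1) by linarith
  then show "2 \<le> n" by (cases "n \<le> 1") (auto simp: le_Suc_eq)
  show "15 \<le> z"
  proof (rule ccontr)
    assume "\<not> 15 \<le> z"
    then have "real n powr (z - 15) < 1" using \<open>2 \<le> n\<close> by (intro powr_less_one) auto
    then show False using big by simp
  qed
qed

lemma kernel_gap_constant:
  assumes "1 \<le> A" "2 \<le> n" "15 \<le> z"
  shows "1 < A * real n powr (z / 3)" "A / (A * real n powr (z / 3)) = real n powr (- z / 3)"
proof -
  have "1 < real n powr (z / 3)" using assms(2,3) by (intro gr_one_powr) auto
  then show "1 < A * real n powr (z / 3)"
    using assms(1) mult_right_mono[of 1 A "real n powr (z / 3)"] by simp
  show "A / (A * real n powr (z / 3)) = real n powr (- z / 3)"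
    using assms(1) by (simp add: powr_minus_divide)
qed

theorem lemma12:
  fixes K :: "real \<Rightarrow> real" and cK A \<alpha> \<sigma> z :: real
    and n k :: nat and x :: "nat \<Rightarrow> 'a::euclidean_space"
    and C :: "nat \<Rightarrow> 'a set" and dl :: "nat \<Rightarrow> real" and \<delta> :: ereal
    and U :: "nat \<Rightarrow> nat \<Rightarrow> real" and lam :: "nat \<Rightarrow> real"
  assumes AK1_pos: "\<forall>t\<ge>0. K t > 0"
    and AK1_mono: "\<forall>s t. 0 \<le> s \<longrightarrow> s \<le> t \<longrightarrow> K t \<le> K s"
    and AK2_zero: "K 0 = 1"
    and AK2_int: "cK > 0" "((\<lambda>v::'a. cK * K (norm v)) has_integral 1) UNIV"
    and AK3: "A > 0" "\<alpha> > 0"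
      "\<forall>s t. 0 \<le> t \<longrightarrow> t \<le> s \<longrightarrow> K s / K t \<le> A * exp (- ((s - t) powr \<alpha>))"
    and pts: "inj_on x {..<n}"
    and part_ne: "\<forall>l<k. C l \<noteq> {}"
    and part_cover: "(\<Union>l<k. C l) = x ` {..<n}"
    and part_disj: "\<forall>l<k. \<forall>m<k. l \<noteq> m \<longrightarrow> C l \<inter> C m = {}"
    and conn: "\<forall>l<k. connected_at_dist (dl l) (C l)"
    and delta_def: "\<delta> = Min ((\<lambda>m. set_dist (C m) (x ` {..<n} - C m)) ` {..<k})
                          - ereal (Max (dl ` {..<k}))"
    and delta_pos: "\<delta> > 0"
    and eig: "ordered_orthonormal_eigenbasis n (laplacian n K \<sigma> x) U lam"
    and z: "real n powr (z - 15) \<ge> 81 * real k ^ 15"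
    and sigma: "0 < \<sigma>" "ereal \<sigma> < \<delta> * ereal ((ln (A * real n powr (z / 3))) powr (- 1 / \<alpha>))"
  shows "(\<forall>l<k. \<forall>i<n. \<forall>j<n. x i \<in> C l \<and> x j \<in> C l \<longrightarrow>
            row_dist k U i j \<le> (real k ^ 3 / real n powr (z - 9)) powr (1 / 6)) \<and>
         (\<forall>l<k. \<forall>i<n. \<forall>j<n. x i \<in> C l \<and> x j \<notin> C l \<longrightarrow>
            row_dist k U i j \<ge> sqrt (2 / real n) - 6 * (real k ^ 27 / real n powr (z - 15)) powr (1 / 24))"
proof (cases "k = 0")
  case False
  then have k: "0 < k" by simp
  interpret point_partition n k x C
    using pts part_ne part_cover part_disj by unfold_locales
  have nz: "2 \<le> n" "15 \<le> z" using size_and_exponent_of_bound[OF z k] by auto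
  define D where "D = Max (dl ` {..<k})"
  define N where "N = A * real n powr (z / 3)"
  have N: "1 < N" "A / N = real n powr (- z / 3)"
    using kernel_gap_constant[OF decay_constant_ge_one[OF AK3(3)] nz] AK2_zero by (simp_all add: N_def)
  show ?thesis
  proof (cases "D < 0")
    case True
    then show ?thesis
      by (intro row_dist_bounds_of_singleton_clusters[OF conn _ eig]) (simp_all add: D_def)
  next
    case False
    have "ereal \<sigma> < (separation - ereal D) * ereal (ln N powr (- 1 / \<alpha>))"
      using sigma(2) unfolding delta_def separation_def D_def N_def .
    then have "spectral_clusters n k cluster (affinity K \<sigma> x) U lam (K (D / \<sigma>)) (real n powr (- z / 3))"
      using False spectral_clusters_affinity[OF AK1_pos AK1_mono AK3(3,1,2) N(1) sigma(1) conn D_def _ _ eig]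
      by (simp add: N(2))
    then show ?thesis
      using within_bound_eq_root[of n k z] between_bound_le_root[of n k z] nz k
      by (intro row_dist_bounds_of_spectral_clusters) auto
  qed
qed simp

end
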